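(* Under the multi-period setup below with Assumptions 1-MP, 2-MP(a), 3-MP and Strong Parallel Trends (5-MP), for every $g\in\mathcal{G}\setminus\{\mathcal{T}+1\}$, every $t\in\{2,\dots,\mathcal{T}\}$ with $t\ge g$, and every $d\in\mathcal{D}_+$, $$ATE(g,t,d)=\mathbb{E}[Y_t-Y_{g-1}\mid G=g,D=d]-\mathbb{E}[Y_t-Y_{g-1}\mid W_t=0].$$ If in addition 2-MP(b),(c) hold, then $d\mapsto\mathbb{E}[Y_t(g,d)\mid G=g]$ is differentiable on $\mathcal{D}_+$ and $$ACR(g,t,d)=\frac{\partial\,\mathbb{E}[Y_t-Y_{g-1}\mid G=g,D=d]}{\partial d}.$$
   Context: Multi-period setup. Periods $t=1,\dots,\mathcal{T}$. Each unit has a timing group $G\in\mathcal{G}\subseteq\{2,\dots,\mathcal{T}+1\}$ ($G=\mathcal{T}+1$ means never treated) and a dose $D\ge0$, with $D=0$ exactly for never-treated units and $D\in\mathcal{D}_+$ for units with $G\le\mathcal{T}$. Potential outcomes $Y_t(g,d)$; $Y_t(0):=Y_t(\mathcal{T}+1,0)$. $W_t:=D\,\mathbf{1}\{t\ge G\}$. Observed outcomes $Y_t=Y_t(0)\mathbf{1}\{t<G\}+Y_t(G,D)\mathbf{1}\{t\ge G\}$. $\Delta Y_t:=Y_t-Y_{t-1}$, $\Delta Y_t(0):=Y_t(0)-Y_{t-1}(0)$. All outcomes have finite second moments. 1-MP: $\{Y_{i1},\dots,Y_{i\mathcal{T}},D_i,G_i\}_{i=1}^n$ are i.i.d. 2-MP: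 (a) the support of $D$ is $\{0\}\cup\mathcal{D}_+$, $\mathcal{D}_+\subset(0,\infty)$, $\mathbb{P}(D=0)>0$, and for each $g\in\mathcal{G}\setminus\{\mathcal{T}+1\}$ every $d\in\mathcal{D}_+$ is in the support of $D$ given $G=g$; (b) $\mathcal{D}_+=[d_L,d_U]$, $0<d_L<d_U<\infty$; (c) for all $g\in\mathcal{G}\setminus\{\mathcal{T}+1\}$ and $t=2,\dots,\mathcal{T}$, $d\mapsto\mathbb{E}[\Delta Y_t\mid G=g,D=d]$ is continuously differentiable on $\mathcal{D}_+$. 3-MP: (a) for $t<g$, $Y_t(g,d)=Y_t(0)$; (b) $W_1=0$ a.s. and $W_{t-1}=d$ implies $W_t=d$ (staggered adoption). Parameters: $ATE(g,t,d):=\mathbb{E}[Y_t(g,d)-Y_t(0)\mid G=g]$; $ACR(g,t,d):=\frac{\partial\mathbb{E}[Y_t(g,d)\mid G=g]}{\partial d}$. 5-MP (Strong Parallel Trends): for all $g\in\mathcal{G}$, $t=2,\dots,\mathcal{T}$, $d\in\mathcal{D}$: $\mathbb{E}[Y_t(g,d)-Y_{t-1}(0)\mid G=g,D=d]=\mathbb{E}[Y_t(g,d)-Y_{t-1}(0)\mid G=g]$ and $\mathbb{E}[\Delta Y_t(0)\mid G=g,D=d]=\mathbb{E}[\Delta Y_t(0)\mid D=0]$. *)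

theory Defs
  imports "HOL-Probability.Probability"
begin

text \<open>Multi-period DiD with continuous treatment.
  Yp t g d \<omega> is the potential outcome Y_t(g,d); group T+1 means never treated;
  Y_t(0) := Y_t(T+1,0).\<close>

definition Yobs :: "nat \<Rightarrow> (nat \<Rightarrow> nat \<Rightarrow> real \<Rightarrow> 'a \<Rightarrow> real) \<Rightarrow> ('a \<Rightarrow> nat) \<Rightarrow> ('a \<Rightarrow> real)
    \<Rightarrow> nat \<Rightarrow> 'a \<Rightarrow> real" where
  "Yobs T Yp G D t \<omega> = (if t < G \<omega> then Yp t (Suc T) 0 \<omega> else Yp t (G \<omega>) (D \<omega>) \<omega>)"

definition W :: "('a \<Rightarrow> nat) \<Rightarrow> ('a \<Rightarrow> real) \<Rightarrow> nat \<Rightarrow> 'a \<Rightarrow> real" where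
  "W G D t \<omega> = (if G \<omega> \<le> t then D \<omega> else 0)"

definition cexp_ev :: "'a measure \<Rightarrow> 'a set \<Rightarrow> ('a \<Rightarrow> real) \<Rightarrow> real" where
  "cexp_ev M A X = (\<integral>\<omega>. indicator A \<omega> * X \<omega> \<partial>M) / measure M A"

text \<open>E[X | G=g, D=d], computed from a regular conditional distribution K of the
  sample point given (G,D).\<close>
definition cexp_GD :: "(nat \<Rightarrow> real \<Rightarrow> 'a measure) \<Rightarrow> ('a \<Rightarrow> real) \<Rightarrow> nat \<Rightarrow> real \<Rightarrow> real" where
  "cexp_GD K X g d = (\<integral>\<omega>. X \<omega> \<partial>(K g d))"

definition supp_GD :: "nat \<Rightarrow> nat set \<Rightarrow> real set \<Rightarrow> (nat \<times> real) set" where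
  "supp_GD T Gs Dp = {(g, d). g \<in> Gs \<and> ((g = Suc T \<and> d = 0) \<or> (g \<le> T \<and> d \<in> Dp))}"

definition rcd :: "'a measure \<Rightarrow> ('a \<Rightarrow> nat) \<Rightarrow> ('a \<Rightarrow> real) \<Rightarrow> (nat \<Rightarrow> real \<Rightarrow> 'a measure)
    \<Rightarrow> (nat \<times> real) set \<Rightarrow> bool" where
  "rcd M G D K S \<longleftrightarrow>
     (\<forall>g d. prob_space (K g d) \<and> sets (K g d) = sets M) \<and>
     (\<forall>A\<in>sets M. (\<lambda>\<omega>. measure (K (G \<omega>) (D \<omega>)) A) \<in> borel_measurable M) \<and>
     (\<forall>A\<in>sets M. \<forall>B\<in>sets borel. \<forall>g.
        measure M (A \<inter> {\<omega>\<in>space M. G \<omega> = g \<and> D \<omega> \<in> B})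
        = (\<integral>\<omega>. indicator {\<omega>\<in>space M. G \<omega> = g \<and> D \<omega> \<in> B} \<omega> * measure (K (G \<omega>) (D \<omega>)) A \<partial>M)) \<and>
     (\<forall>(g, d)\<in>S. AE \<omega> in K g d. G \<omega> = g \<and> D \<omega> = d)"

definition in_support :: "'a measure \<Rightarrow> ('a \<Rightarrow> real) \<Rightarrow> real \<Rightarrow> bool" where
  "in_support M X x \<longleftrightarrow> (\<forall>e>0. measure M {\<omega>\<in>space M. dist (X \<omega>) x < e} > 0)"

definition in_support_given :: "'a measure \<Rightarrow> ('a \<Rightarrow> nat) \<Rightarrow> nat \<Rightarrow> ('a \<Rightarrow> real) \<Rightarrow> real \<Rightarrow> bool" where
  "in_support_given M G g X x \<longleftrightarrow>
     (\<forall>e>0. measure M {\<omega>\<in>space M. G \<omega> = g \<and> dist (X \<omega>) x < e} > 0)"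

definition ATE :: "'a measure \<Rightarrow> ('a \<Rightarrow> nat) \<Rightarrow> nat \<Rightarrow> (nat \<Rightarrow> nat \<Rightarrow> real \<Rightarrow> 'a \<Rightarrow> real)
    \<Rightarrow> nat \<Rightarrow> nat \<Rightarrow> real \<Rightarrow> real" where
  "ATE M G T Yp g t d = cexp_ev M {\<omega>\<in>space M. G \<omega> = g} (\<lambda>\<omega>. Yp t g d \<omega> - Yp t (Suc T) 0 \<omega>)"

text \<open>ACR(g,t,d): derivative in d of E[Y_t(g,d) | G=g], taken within D_+ (one-sided at endpoints).\<close>
definition ACR :: "'a measure \<Rightarrow> ('a \<Rightarrow> nat) \<Rightarrow> real set \<Rightarrow> (nat \<Rightarrow> nat \<Rightarrow> real \<Rightarrow> 'a \<Rightarrow> real)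
    \<Rightarrow> nat \<Rightarrow> nat \<Rightarrow> real \<Rightarrow> real" where
  "ACR M G Dp Yp g t d =
     vector_derivative (\<lambda>x. cexp_ev M {\<omega>\<in>space M. G \<omega> = g} (Yp t g x)) (at d within Dp)"

definition C1_within :: "real set \<Rightarrow> (real \<Rightarrow> real) \<Rightarrow> bool" where
  "C1_within S f \<longleftrightarrow>
     (\<exists>f'. (\<forall>x\<in>S. (f has_real_derivative f' x) (at x within S)) \<and> continuous_on S f')"

end

theory Submission
  imports Defs
begin

(* Strong parallel trends make the untreated trend E[Y_s(0) - Y_(s-1)(0) | G = g, D = d] equal,
   for every (g, d) in the support, to the common trend c_s of the never-treated units.
   Disintegrating M along the regular conditional distribution K turns this into the same
   statement for every union of timing groups, in particular for the not-yet-treated units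
   {W_t = 0}. Telescoping Y_t - Y_(g-1) into one-period differences then gives
   E[Y_t - Y_(g-1) | G = g, D = d] = E[Y_t(g,d) - Y_(t-1)(0) | G = g] + c_g + ... + c_(t-1) and
   E[Y_t - Y_(g-1) | W_t = 0] = c_g + ... + c_t, whose difference is ATE(g,t,d).
   As a function of d, E[Y_t(g,d) | G = g] differs from E[Y_t - Y_(g-1) | G = g, D = d] only by
   a constant, and the latter is a sum of C^1 functions of d, which gives the ACR. *)

lemma integrable_indicator_times:
  fixes f :: "'a \<Rightarrow> real"
  shows "A \<in> sets M \<Longrightarrow> integrable M f \<Longrightarrow> integrable M (\<lambda>x. indicator A x * f x)"
  using integrable_mult_indicator[of A M f] by simp

lemma nn_integral_indicator_disintegration:
  fixes \<kappa> :: "'a \<Rightarrow> 'a measure"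
  assumes \<kappa>: "\<kappa> \<in> measurable M (subprob_algebra M)"
    and E: "E \<in> sets M"
    and disint: "\<And>A. A \<in> sets M \<Longrightarrow>
      emeasure M (A \<inter> E) = (\<integral>\<^sup>+\<omega>. indicator E \<omega> * emeasure (\<kappa> \<omega>) A \<partial>M)"
    and f: "f \<in> borel_measurable M"
  shows "(\<integral>\<^sup>+\<omega>. indicator E \<omega> * f \<omega> \<partial>M) = (\<integral>\<^sup>+\<omega>. indicator E \<omega> * (\<integral>\<^sup>+y. f y \<partial>\<kappa> \<omega>) \<partial>M)"
proof (cases "space M = {}")
  case True
  then show ?thesis by (simp add: nn_integral_empty)
next
  case nonempty: False
  define N where "N = density M (indicator E)"
  have \<kappa>N: "\<kappa> \<in> measurable N (subprob_algebra M)"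
    using \<kappa> unfolding N_def by simp
  (* the hypothesis says that M restricted to E is invariant under the kernel *)
  have "N = N \<bind> \<kappa>"
  proof (rule measure_eqI)
    show "sets N = sets (N \<bind> \<kappa>)"
      using sets_bind[of N \<kappa> M] sets_kernel[OF \<kappa>N] nonempty by (simp add: N_def)
  next
    fix A assume "A \<in> sets N"
    then have A: "A \<in> sets M" by (simp add: N_def)
    have "emeasure N A = (\<integral>\<^sup>+\<omega>. indicator (A \<inter> E) \<omega> \<partial>M)"
      unfolding N_def using A E
      by (simp add: emeasure_density mult.commute indicator_inter_arith[symmetric])
    also have "\<dots> = (\<integral>\<^sup>+\<omega>. indicator E \<omega> * emeasure (\<kappa> \<omega>) A \<partial>M)"
      using A E disint by simp
    also have "\<dots> = (\<integral>\<^sup>+\<omega>. emeasure (\<kappa> \<omega>) A \<partial>N)"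
      unfolding N_def using A E \<kappa>
      by (simp add: nn_integral_density measurable_emeasure_subprob_algebra)
    also have "\<dots> = emeasure (N \<bind> \<kappa>) A"
      using nonempty \<kappa>N A by (simp add: emeasure_bind N_def)
    finally show "emeasure N A = emeasure (N \<bind> \<kappa>) A" .
  qed
  have "(\<integral>\<^sup>+\<omega>. indicator E \<omega> * f \<omega> \<partial>M) = (\<integral>\<^sup>+\<omega>. f \<omega> \<partial>N)"
    unfolding N_def using E f by (simp add: nn_integral_density)
  also have "\<dots> = (\<integral>\<^sup>+\<omega>. f \<omega> \<partial>(N \<bind> \<kappa>))"
    using \<open>N = N \<bind> \<kappa>\<close> by simp
  also have "\<dots> = (\<integral>\<^sup>+\<omega>. (\<integral>\<^sup>+y. f y \<partial>\<kappa> \<omega>) \<partial>N)"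
    using f \<kappa>N by (rule nn_integral_bind)
  also have "\<dots> = (\<integral>\<^sup>+\<omega>. indicator E \<omega> * (\<integral>\<^sup>+y. f y \<partial>\<kappa> \<omega>) \<partial>M)"
    unfolding N_def using E f \<kappa> by (simp add: nn_integral_density)
  finally show ?thesis .
qed

lemma integral_indicator_disintegration_nonneg:
  fixes \<kappa> :: "'a \<Rightarrow> 'a measure" and X :: "'a \<Rightarrow> real"
  assumes \<kappa>: "\<kappa> \<in> measurable M (subprob_algebra M)"
    and E: "E \<in> sets M"
    and disint: "\<And>A. A \<in> sets M \<Longrightarrow>
      emeasure M (A \<inter> E) = (\<integral>\<^sup>+\<omega>. indicator E \<omega> * emeasure (\<kappa> \<omega>) A \<partial>M)"
    and X: "integrable M X" and X_nonneg: "\<And>x. 0 \<le> X x"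
    and X_kernel: "\<And>\<omega>. \<omega> \<in> E \<Longrightarrow> integrable (\<kappa> \<omega>) X"
  shows "integrable M (\<lambda>\<omega>. indicator E \<omega> * (\<integral>y. X y \<partial>\<kappa> \<omega>))"
    and "(\<integral>\<omega>. indicator E \<omega> * X \<omega> \<partial>M) = (\<integral>\<omega>. indicator E \<omega> * (\<integral>y. X y \<partial>\<kappa> \<omega>) \<partial>M)"
proof -
  have Xm: "X \<in> borel_measurable M" using X by simp
  have Rm: "(\<lambda>\<omega>. indicator E \<omega> * (\<integral>y. X y \<partial>\<kappa> \<omega>)) \<in> borel_measurable M"
    using E measurable_compose[OF \<kappa> integral_measurable_subprob_algebra[OF Xm]] by simp
  have "(\<integral>\<^sup>+\<omega>. ennreal (indicator E \<omega> * X \<omega>) \<partial>M) = (\<integral>\<^sup>+\<omega>. indicator E \<omega> * ennreal (X \<omega>) \<partial>M)"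
    by (intro nn_integral_cong) (simp split: split_indicator)
  also have "\<dots> = (\<integral>\<^sup>+\<omega>. indicator E \<omega> * (\<integral>\<^sup>+y. ennreal (X y) \<partial>\<kappa> \<omega>) \<partial>M)"
    using \<kappa> E disint measurable_compose[OF Xm measurable_ennreal]
    by (rule nn_integral_indicator_disintegration)
  also have "\<dots> = (\<integral>\<^sup>+\<omega>. ennreal (indicator E \<omega> * (\<integral>y. X y \<partial>\<kappa> \<omega>)) \<partial>M)"
    using X_kernel X_nonneg
    by (intro nn_integral_cong) (simp add: nn_integral_eq_integral split: split_indicator)
  finally have nn_eq: "(\<integral>\<^sup>+\<omega>. ennreal (indicator E \<omega> * X \<omega>) \<partial>M)
      = (\<integral>\<^sup>+\<omega>. ennreal (indicator E \<omega> * (\<integral>y. X y \<partial>\<kappa> \<omega>)) \<partial>M)" .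
  have "(\<integral>\<^sup>+\<omega>. ennreal (indicator E \<omega> * X \<omega>) \<partial>M) < \<infinity>"
    using integrable_indicator_times[OF E X] X_nonneg by (simp add: integrable_iff_bounded abs_mult)
  with nn_eq Rm X_nonneg show "integrable M (\<lambda>\<omega>. indicator E \<omega> * (\<integral>y. X y \<partial>\<kappa> \<omega>))"
    by (intro integrableI_nonneg) auto
  show "(\<integral>\<omega>. indicator E \<omega> * X \<omega> \<partial>M) = (\<integral>\<omega>. indicator E \<omega> * (\<integral>y. X y \<partial>\<kappa> \<omega>) \<partial>M)"
    using nn_eq Xm Rm E X_nonneg by (simp add: integral_eq_nn_integral)
qed

lemma integral_indicator_disintegration:
  fixes \<kappa> :: "'a \<Rightarrow> 'a measure" and X :: "'a \<Rightarrow> real"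
  assumes \<kappa>: "\<kappa> \<in> measurable M (subprob_algebra M)"
    and E: "E \<in> sets M"
    and disint: "\<And>A. A \<in> sets M \<Longrightarrow>
      emeasure M (A \<inter> E) = (\<integral>\<^sup>+\<omega>. indicator E \<omega> * emeasure (\<kappa> \<omega>) A \<partial>M)"
    and X: "integrable M X"
    and X_kernel: "\<And>\<omega>. \<omega> \<in> E \<Longrightarrow> integrable (\<kappa> \<omega>) X"
  shows "(\<integral>\<omega>. indicator E \<omega> * X \<omega> \<partial>M) = (\<integral>\<omega>. indicator E \<omega> * (\<integral>y. X y \<partial>\<kappa> \<omega>) \<partial>M)"
proof -
  define P where "P = (\<lambda>x. max (X x) 0)"
  define N where "N = (\<lambda>x. max (- X x) 0)"
  have X_eq: "X = (\<lambda>x. P x - N x)" by (auto simp: P_def N_def)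
  have nonneg: "0 \<le> P x" "0 \<le> N x" for x by (auto simp: P_def N_def)
  have PN: "integrable M P" "integrable M N" using X by (auto simp: P_def N_def)
  have PN_kernel: "integrable (\<kappa> \<omega>) P" "integrable (\<kappa> \<omega>) N" if "\<omega> \<in> E" for \<omega>
    using X_kernel[OF that] by (auto simp: P_def N_def)
  note pos = integral_indicator_disintegration_nonneg[OF \<kappa> E disint PN(1) nonneg(1) PN_kernel(1)]
  note neg = integral_indicator_disintegration_nonneg[OF \<kappa> E disint PN(2) nonneg(2) PN_kernel(2)]
  have "(\<integral>\<omega>. indicator E \<omega> * X \<omega> \<partial>M)
      = (\<integral>\<omega>. indicator E \<omega> * P \<omega> \<partial>M) - (\<integral>\<omega>. indicator E \<omega> * N \<omega> \<partial>M)"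
    unfolding X_eq right_diff_distrib
    by (intro Bochner_Integration.integral_diff integrable_indicator_times E PN)
  also have "\<dots> = (\<integral>\<omega>. indicator E \<omega> * (\<integral>y. P y \<partial>\<kappa> \<omega>) \<partial>M)
      - (\<integral>\<omega>. indicator E \<omega> * (\<integral>y. N y \<partial>\<kappa> \<omega>) \<partial>M)"
    using pos(2) neg(2) by simp
  also have "\<dots> = (\<integral>\<omega>. indicator E \<omega> * (\<integral>y. P y \<partial>\<kappa> \<omega>) - indicator E \<omega> * (\<integral>y. N y \<partial>\<kappa> \<omega>) \<partial>M)"
    using pos(1) neg(1) by (rule Bochner_Integration.integral_diff[symmetric])
  also have "\<dots> = (\<integral>\<omega>. indicator E \<omega> * (\<integral>y. X y \<partial>\<kappa> \<omega>) \<partial>M)"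
    using PN_kernel unfolding X_eq
    by (intro Bochner_Integration.integral_cong) (auto split: split_indicator)
  finally show ?thesis .
qed

lemma rcd_kernel_measurable:
  assumes "rcd M G D K R"
  shows "(\<lambda>\<omega>. K (G \<omega>) (D \<omega>)) \<in> measurable M (subprob_algebra M)"
proof (rule measurable_subprob_algebra)
  fix \<omega>
  show "subprob_space (K (G \<omega>) (D \<omega>))" "sets (K (G \<omega>) (D \<omega>)) = sets M"
    using assms by (auto simp: rcd_def prob_space_imp_subprob_space)
next
  fix A assume "A \<in> sets M"
  then have "(\<lambda>\<omega>. ennreal (measure (K (G \<omega>) (D \<omega>)) A)) \<in> borel_measurable M"
    using assms by (simp add: rcd_def)
  then show "(\<lambda>\<omega>. emeasure (K (G \<omega>) (D \<omega>)) A) \<in> borel_measurable M"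
    using assms by (simp add: rcd_def prob_space_def finite_measure.emeasure_eq_measure)
qed

lemma rcd_emeasure_group:
  assumes M: "finite_measure M" and G: "G \<in> measurable M (count_space UNIV)"
    and rcd: "rcd M G D K R" and A: "A \<in> sets M"
  shows "emeasure M (A \<inter> {\<omega>\<in>space M. G \<omega> = g})
    = (\<integral>\<^sup>+\<omega>. indicator {\<omega>\<in>space M. G \<omega> = g} \<omega> * emeasure (K (G \<omega>) (D \<omega>)) A \<partial>M)"
proof -
  interpret finite_measure M by (rule M)
  define Eg where "Eg = {\<omega>\<in>space M. G \<omega> = g}"
  have Eg: "Eg \<in> sets M" unfolding Eg_def using G by measurable
  have K_prob: "prob_space (K g' d)" for g' d using rcd by (simp add: rcd_def)
  have "(\<lambda>\<omega>. measure (K (G \<omega>) (D \<omega>)) A) \<in> borel_measurable M"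
    using rcd A by (simp add: rcd_def)
  then have int: "integrable M (\<lambda>\<omega>. indicator Eg \<omega> * measure (K (G \<omega>) (D \<omega>)) A)"
    using Eg K_prob by (intro integrable_const_bound[where B=1])
      (auto simp: prob_space.prob_le_1 split: split_indicator)
  have "emeasure M (A \<inter> Eg) = ennreal (measure M (A \<inter> Eg))"
    by (simp add: emeasure_eq_measure)
  also have "measure M (A \<inter> Eg) = (\<integral>\<omega>. indicator Eg \<omega> * measure (K (G \<omega>) (D \<omega>)) A \<partial>M)"
  proof -
    have "\<forall>A\<in>sets M. \<forall>B\<in>sets borel. \<forall>g.
        measure M (A \<inter> {\<omega>\<in>space M. G \<omega> = g \<and> D \<omega> \<in> B})
        = (\<integral>\<omega>. indicator {\<omega>\<in>space M. G \<omega> = g \<and> D \<omega> \<in> B} \<omega> * measure (K (G \<omega>) (D \<omega>)) A \<partial>M)"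
      using rcd by (simp add: rcd_def)
    from this[rule_format, OF A, of UNIV g] show ?thesis by (simp add: Eg_def)
  qed
  also have "ennreal \<dots> = (\<integral>\<^sup>+\<omega>. indicator Eg \<omega> * measure (K (G \<omega>) (D \<omega>)) A \<partial>M)"
    using int by (simp add: nn_integral_eq_integral)
  also have "\<dots> = (\<integral>\<^sup>+\<omega>. indicator Eg \<omega> * emeasure (K (G \<omega>) (D \<omega>)) A \<partial>M)"
    using K_prob by (intro nn_integral_cong)
      (simp add: prob_space_def finite_measure.emeasure_eq_measure split: split_indicator)
  finally show ?thesis unfolding Eg_def .
qed

lemma rcd_emeasure_groups:
  assumes M: "finite_measure M" and G: "G \<in> measurable M (count_space UNIV)"
    and rcd: "rcd M G D K R" and I: "finite I" and A: "A \<in> sets M"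
  shows "emeasure M (A \<inter> {\<omega>\<in>space M. G \<omega> \<in> I})
    = (\<integral>\<^sup>+\<omega>. indicator {\<omega>\<in>space M. G \<omega> \<in> I} \<omega> * emeasure (K (G \<omega>) (D \<omega>)) A \<partial>M)"
proof -
  have groups: "{\<omega>\<in>space M. G \<omega> = g} \<in> sets M" for g using G by measurable
  have "(\<Sum>g\<in>I. emeasure M (A \<inter> {\<omega>\<in>space M. G \<omega> = g}))
      = emeasure M (\<Union>g\<in>I. A \<inter> {\<omega>\<in>space M. G \<omega> = g})"
    using I A groups by (intro sum_emeasure) (auto simp: disjoint_family_on_def)
  moreover have "(\<Union>g\<in>I. A \<inter> {\<omega>\<in>space M. G \<omega> = g}) = A \<inter> {\<omega>\<in>space M. G \<omega> \<in> I}" by auto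
  ultimately have "emeasure M (A \<inter> {\<omega>\<in>space M. G \<omega> \<in> I})
      = (\<Sum>g\<in>I. emeasure M (A \<inter> {\<omega>\<in>space M. G \<omega> = g}))" by simp
  also have "\<dots> = (\<Sum>g\<in>I. \<integral>\<^sup>+\<omega>. indicator {\<omega>\<in>space M. G \<omega> = g} \<omega> * emeasure (K (G \<omega>) (D \<omega>)) A \<partial>M)"
    using rcd_emeasure_group[OF M G rcd A] by simp
  also have "\<dots> = (\<integral>\<^sup>+\<omega>. (\<Sum>g\<in>I. indicator {\<omega>\<in>space M. G \<omega> = g} \<omega>) * emeasure (K (G \<omega>) (D \<omega>)) A \<partial>M)"
    using groups measurable_compose[OF rcd_kernel_measurable[OF rcd] measurable_emeasure_subprob_algebra[OF A]]
    by (subst nn_integral_sum[symmetric]) (auto simp: sum_distrib_right)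
  also have "\<dots> = (\<integral>\<^sup>+\<omega>. indicator {\<omega>\<in>space M. G \<omega> \<in> I} \<omega> * emeasure (K (G \<omega>) (D \<omega>)) A \<partial>M)"
  proof (intro nn_integral_cong)
    fix \<omega>
    have "(\<Sum>g\<in>I. indicator {\<omega>\<in>space M. G \<omega> = g} \<omega>) = (indicator {\<omega>\<in>space M. G \<omega> \<in> I} \<omega> :: ennreal)"
      using I by (cases "\<omega> \<in> space M") (auto simp: indicator_def)
    then show "(\<Sum>g\<in>I. indicator {\<omega>\<in>space M. G \<omega> = g} \<omega>) * emeasure (K (G \<omega>) (D \<omega>)) A
        = indicator {\<omega>\<in>space M. G \<omega> \<in> I} \<omega> * emeasure (K (G \<omega>) (D \<omega>)) A" by simp
  qed
  finally show ?thesis .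
qed

lemma rcd_cexp_ev_groups:
  fixes X :: "'a \<Rightarrow> real"
  assumes M: "finite_measure M" and G: "G \<in> measurable M (count_space UNIV)"
    and rcd: "rcd M G D K R" and I: "finite I"
    and pos: "measure M {\<omega>\<in>space M. G \<omega> \<in> I} \<noteq> 0"
    and X: "integrable M X"
    and X_kernel: "\<And>\<omega>. \<omega> \<in> space M \<Longrightarrow> G \<omega> \<in> I \<Longrightarrow>
      integrable (K (G \<omega>) (D \<omega>)) X \<and> (\<integral>y. X y \<partial>K (G \<omega>) (D \<omega>)) = c"
  shows "cexp_ev M {\<omega>\<in>space M. G \<omega> \<in> I} X = c"
proof -
  define E where "E = {\<omega>\<in>space M. G \<omega> \<in> I}"
  have E: "E \<in> sets M" unfolding E_def using G by measurable
  have "(\<integral>\<omega>. indicator E \<omega> * X \<omega> \<partial>M) = (\<integral>\<omega>. indicator E \<omega> * (\<integral>y. X y \<partial>K (G \<omega>) (D \<omega>)) \<partial>M)"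
  proof (rule integral_indicator_disintegration[OF rcd_kernel_measurable[OF rcd] E _ X])
    show "emeasure M (A \<inter> E) = (\<integral>\<^sup>+\<omega>. indicator E \<omega> * emeasure (K (G \<omega>) (D \<omega>)) A \<partial>M)"
      if "A \<in> sets M" for A
      unfolding E_def using that by (rule rcd_emeasure_groups[OF M G rcd I])
    show "integrable (K (G \<omega>) (D \<omega>)) X" if "\<omega> \<in> E" for \<omega>
      using X_kernel that by (simp add: E_def)
  qed
  also have "\<dots> = (\<integral>\<omega>. indicator E \<omega> * c \<partial>M)"
    using X_kernel unfolding E_def
    by (intro Bochner_Integration.integral_cong) (auto split: split_indicator)
  also have "\<dots> = c * measure M E" using E by simp
  finally show ?thesis using pos by (simp add: cexp_ev_def E_def)
qed

lemma cexp_ev_cong: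
  "(\<And>\<omega>. \<omega> \<in> A \<Longrightarrow> X \<omega> = Y \<omega>) \<Longrightarrow> cexp_ev M A X = cexp_ev M A Y"
  unfolding cexp_ev_def by (metis indicator_simps(2) mult_eq_0_iff)

lemma cexp_ev_diff:
  fixes X Y :: "'a \<Rightarrow> real"
  assumes "A \<in> sets M" "integrable M X" "integrable M Y"
  shows "cexp_ev M A (\<lambda>\<omega>. X \<omega> - Y \<omega>) = cexp_ev M A X - cexp_ev M A Y"
  using assms unfolding cexp_ev_def right_diff_distrib
  by (simp add: integrable_indicator_times diff_divide_distrib)

lemma cexp_ev_sum:
  fixes X :: "'i \<Rightarrow> 'a \<Rightarrow> real"
  assumes "A \<in> sets M" "\<And>i. i \<in> I \<Longrightarrow> integrable M (X i)"
  shows "cexp_ev M A (\<lambda>\<omega>. \<Sum>i\<in>I. X i \<omega>) = (\<Sum>i\<in>I. cexp_ev M A (X i))"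
  using assms unfolding cexp_ev_def sum_distrib_left
  by (simp add: integrable_indicator_times sum_divide_distrib)

lemma sum_diff_pred_telescope:
  fixes f :: "nat \<Rightarrow> 'a::ab_group_add"
  shows "m \<le> n \<Longrightarrow> (\<Sum>s = Suc m..n. f s - f (s - 1)) = f n - f m"
  by (induction n) (auto simp: le_Suc_eq)

lemma C1_within_sum:
  assumes "\<And>i. i \<in> I \<Longrightarrow> C1_within S (f i)"
  shows "C1_within S (\<lambda>x. \<Sum>i\<in>I. f i x)"
proof -
  have "\<forall>i\<in>I. \<exists>f'. (\<forall>x\<in>S. (f i has_real_derivative f' x) (at x within S)) \<and> continuous_on S f'"
    using assms unfolding C1_within_def by blast
  from bchoice[OF this] obtain f' where f'_def: "\<forall>i\<in>I. (\<forall>x\<in>S. (f i has_real_derivative f' i x) (at x within S))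
      \<and> continuous_on S (f' i)"
    by blast
  then have f': "\<And>i x. i \<in> I \<Longrightarrow> x \<in> S \<Longrightarrow> (f i has_real_derivative f' i x) (at x within S)"
    and cont: "\<And>i. i \<in> I \<Longrightarrow> continuous_on S (f' i)"
    by auto
  have "((\<lambda>x. \<Sum>i\<in>I. f i x) has_real_derivative (\<Sum>i\<in>I. f' i x)) (at x within S)" if "x \<in> S" for x
    using DERIV_sum[of I "\<lambda>y i. f i y" "\<lambda>i. f' i x" "at x within S"] f' that by simp
  moreover have "continuous_on S (\<lambda>x. \<Sum>i\<in>I. f' i x)"
    using cont by (intro continuous_on_sum) auto
  ultimately show ?thesis unfolding C1_within_def by (intro exI[of _ "\<lambda>x. \<Sum>i\<in>I. f' i x"]) simp
qed

lemma C1_within_cong: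
  assumes "C1_within S f" "\<And>x. x \<in> S \<Longrightarrow> f x = g x"
  shows "C1_within S g"
proof -
  obtain f' where f': "\<And>x. x \<in> S \<Longrightarrow> (f has_real_derivative f' x) (at x within S)"
    and "continuous_on S f'"
    using assms(1) unfolding C1_within_def by blast
  moreover have "(g has_real_derivative f' x) (at x within S)" if "x \<in> S" for x
    using f'[OF that] zero_less_one that assms(2)
    by (rule has_field_derivative_transform_within) simp
  ultimately show ?thesis unfolding C1_within_def by blast
qed

lemma differentiable_on_interval_plus_const:
  fixes f g :: "real \<Rightarrow> real"
  assumes ab: "a < b" and f: "f differentiable_on {a..b}"
    and g: "\<And>x. x \<in> {a..b} \<Longrightarrow> g x = f x + c"
  shows "g differentiable_on {a..b}"
    and "\<And>x. x \<in> {a..b} \<Longrightarrow>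
      vector_derivative g (at x within {a..b}) = vector_derivative f (at x within {a..b})"
proof -
  have g_deriv: "(g has_vector_derivative vector_derivative f (at x within {a..b})) (at x within {a..b})"
    if x: "x \<in> {a..b}" for x
  proof -
    have "(f has_vector_derivative vector_derivative f (at x within {a..b})) (at x within {a..b})"
      using f x by (simp add: differentiable_on_def vector_derivative_works)
    then have "((\<lambda>x. f x + c) has_vector_derivative vector_derivative f (at x within {a..b}))
        (at x within {a..b})"
      using has_vector_derivative_add_const by blast
    then show ?thesis
      using zero_less_one x by (rule has_vector_derivative_transform_within) (simp add: g)
  qed
  then show "g differentiable_on {a..b}"
    unfolding differentiable_on_def using differentiableI_vector by blast
  show "vector_derivative g (at x within {a..b}) = vector_derivative f (at x within {a..b})"
    if "x \<in> {a..b}" for x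
    using ab that g_deriv[OF that] by (rule vector_derivative_within_closed_interval)
qed

lemma C1_within_imp_differentiable_on: "C1_within S f \<Longrightarrow> f differentiable_on S"
  unfolding C1_within_def differentiable_on_def
  by (metis differentiableI_vector has_real_derivative_iff_has_vector_derivative)

locale staggered_did = prob_space M
  for M :: "'a measure" and T :: nat and Gs :: "nat set" and Dp :: "real set"
    and G :: "'a \<Rightarrow> nat" and D :: "'a \<Rightarrow> real"
    and Yp :: "nat \<Rightarrow> nat \<Rightarrow> real \<Rightarrow> 'a \<Rightarrow> real" and K :: "nat \<Rightarrow> real \<Rightarrow> 'a measure" +
  assumes G_measurable: "G \<in> measurable M (count_space UNIV)"
    and D_measurable: "D \<in> borel_measurable M"
    and groups_bounded: "Gs \<subseteq> {2..Suc T}"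
    and G_in_groups: "\<And>\<omega>. \<omega> \<in> space M \<Longrightarrow> G \<omega> \<in> Gs"
    and group_prob_pos: "\<And>g. g \<in> Gs \<Longrightarrow> 0 < prob {\<omega>\<in>space M. G \<omega> = g}"
    and dose_zero_iff_never_treated: "\<And>\<omega>. \<omega> \<in> space M \<Longrightarrow> D \<omega> = 0 \<longleftrightarrow> G \<omega> = Suc T"
    and dose_treated: "\<And>\<omega>. \<omega> \<in> space M \<Longrightarrow> G \<omega> \<le> T \<Longrightarrow> D \<omega> \<in> Dp"
    and doses_pos: "Dp \<subseteq> {0<..}"
    and untreated_prob_pos: "0 < prob {\<omega>\<in>space M. D \<omega> = 0}"
    and PO_measurable: "\<And>t g d. t \<in> {1..T} \<Longrightarrow> (g, d) \<in> supp_GD T Gs Dp \<union> {(Suc T, 0)} \<Longrightarrow>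
      Yp t g d \<in> borel_measurable M"
    and PO_square_integrable: "\<And>t g d. t \<in> {1..T} \<Longrightarrow> (g, d) \<in> supp_GD T Gs Dp \<union> {(Suc T, 0)} \<Longrightarrow>
      integrable M (\<lambda>\<omega>. (Yp t g d \<omega>)\<^sup>2)"
    and Yobs_measurable: "\<And>t. t \<in> {1..T} \<Longrightarrow> Yobs T Yp G D t \<in> borel_measurable M"
    and rcd: "rcd M G D K (supp_GD T Gs Dp)"
    and PO_square_integrable_kernel: "\<And>g' d' t g d. (g', d') \<in> supp_GD T Gs Dp \<Longrightarrow> t \<in> {1..T} \<Longrightarrow>
      (g, d) \<in> supp_GD T Gs Dp \<union> {(Suc T, 0)} \<Longrightarrow> integrable (K g' d') (\<lambda>\<omega>. (Yp t g d \<omega>)\<^sup>2)"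
    and parallel_trends_treated: "\<And>g d t. (g, d) \<in> supp_GD T Gs Dp \<Longrightarrow> t \<in> {2..T} \<Longrightarrow>
      cexp_GD K (\<lambda>\<omega>. Yp t g d \<omega> - Yp (t - 1) (Suc T) 0 \<omega>) g d
        = cexp_ev M {\<omega>\<in>space M. G \<omega> = g} (\<lambda>\<omega>. Yp t g d \<omega> - Yp (t - 1) (Suc T) 0 \<omega>)"
    and parallel_trends_untreated: "\<And>g d t. (g, d) \<in> supp_GD T Gs Dp \<Longrightarrow> t \<in> {2..T} \<Longrightarrow>
      cexp_GD K (\<lambda>\<omega>. Yp t (Suc T) 0 \<omega> - Yp (t - 1) (Suc T) 0 \<omega>) g d
        = cexp_ev M {\<omega>\<in>space M. D \<omega> = 0} (\<lambda>\<omega>. Yp t (Suc T) 0 \<omega> - Yp (t - 1) (Suc T) 0 \<omega>)"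
begin

declare G_measurable [measurable] and D_measurable [measurable]

abbreviation Y0 :: "nat \<Rightarrow> 'a \<Rightarrow> real" where
  "Y0 s \<equiv> Yp s (Suc T) 0"

abbreviation Yo :: "nat \<Rightarrow> 'a \<Rightarrow> real" where
  "Yo s \<equiv> Yobs T Yp G D s"

definition untreated_trend :: "nat \<Rightarrow> real" where
  "untreated_trend s = cexp_ev M {\<omega>\<in>space M. D \<omega> = 0} (\<lambda>\<omega>. Y0 s \<omega> - Y0 (s - 1) \<omega>)"

lemma obs_in_supp_GD: "\<omega> \<in> space M \<Longrightarrow> (G \<omega>, D \<omega>) \<in> supp_GD T Gs Dp"
  using G_in_groups[of \<omega>] groups_bounded dose_zero_iff_never_treated[of \<omega>] dose_treated[of \<omega>]
  by (force simp: supp_GD_def le_Suc_eq)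

lemma treated_in_supp_GD:
  "g \<in> Gs - {Suc T} \<Longrightarrow> d \<in> Dp \<Longrightarrow> (g, d) \<in> supp_GD T Gs Dp"
  using groups_bounded by (force simp: supp_GD_def)

lemma treated_group_bounds: "g \<in> Gs - {Suc T} \<Longrightarrow> 2 \<le> g \<and> g \<le> T"
  using groups_bounded by force

lemma kernel_prob_space: "prob_space (K g d)"
  and sets_kernel_eq: "sets (K g d) = sets M"
  using rcd by (simp_all add: rcd_def)

lemma kernel_borel_measurable: "f \<in> borel_measurable M \<Longrightarrow> f \<in> borel_measurable (K g d)"
  using measurable_cong_sets[OF sets_kernel_eq refl] by blast

lemma PO_integrable:
  "t \<in> {1..T} \<Longrightarrow> (g, d) \<in> supp_GD T Gs Dp \<union> {(Suc T, 0)} \<Longrightarrow> integrable M (Yp t g d)"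
  using PO_measurable PO_square_integrable by (blast intro: square_integrable_imp_integrable)

lemma PO_integrable_kernel:
  assumes "(g', d') \<in> supp_GD T Gs Dp" "t \<in> {1..T}" "(g, d) \<in> supp_GD T Gs Dp \<union> {(Suc T, 0)}"
  shows "integrable (K g' d') (Yp t g d)"
  using finite_measure.square_integrable_imp_integrable[of "K g' d'"]
    kernel_prob_space[unfolded prob_space_def] kernel_borel_measurable[OF PO_measurable]
    PO_square_integrable_kernel assms
  by blast

lemma kernel_Yobs_AE:
  assumes "(g, d) \<in> supp_GD T Gs Dp"
  shows "AE \<omega> in K g d. Yo s \<omega> = (if s < g then Y0 s \<omega> else Yp s g d \<omega>)"
proof -
  have "AE \<omega> in K g d. G \<omega> = g \<and> D \<omega> = d" using rcd assms by (auto simp: rcd_def)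
  then show ?thesis by eventually_elim (simp add: Yobs_def)
qed

lemma Yobs_integrable_kernel:
  assumes gd: "(g, d) \<in> supp_GD T Gs Dp" and s: "s \<in> {1..T}"
  shows "integrable (K g d) (Yo s)"
proof (rule integrable_cong_AE_imp)
  show "integrable (K g d) (\<lambda>\<omega>. if s < g then Y0 s \<omega> else Yp s g d \<omega>)"
    using PO_integrable_kernel[OF gd s, of "Suc T" 0] PO_integrable_kernel[OF gd s, of g d] gd
    by (cases "s < g") simp_all
  show "AE \<omega> in K g d. (if s < g then Y0 s \<omega> else Yp s g d \<omega>) = Yo s \<omega>"
    using kernel_Yobs_AE[OF gd, of s] by (auto elim: AE_mp)
qed (use Yobs_measurable[OF s] kernel_borel_measurable in blast)

lemma kernel_integral_untreated_trend:
  "(g, d) \<in> supp_GD T Gs Dp \<Longrightarrow> s \<in> {2..T} \<Longrightarrow>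
    (\<integral>\<omega>. Y0 s \<omega> - Y0 (s - 1) \<omega> \<partial>K g d) = untreated_trend s"
  using parallel_trends_untreated by (simp add: cexp_GD_def untreated_trend_def)

lemma cexp_ev_groups_untreated_trend:
  assumes I: "I \<subseteq> Gs" and pos: "0 < prob {\<omega>\<in>space M. G \<omega> \<in> I}" and s: "s \<in> {2..T}"
  shows "cexp_ev M {\<omega>\<in>space M. G \<omega> \<in> I} (\<lambda>\<omega>. Y0 s \<omega> - Y0 (s - 1) \<omega>) = untreated_trend s"
proof (rule rcd_cexp_ev_groups[OF finite_measure_axioms G_measurable rcd])
  show "finite I" using I groups_bounded by (meson finite_atLeastAtMost finite_subset)
  show "integrable M (\<lambda>\<omega>. Y0 s \<omega> - Y0 (s - 1) \<omega>)"
    using s by (intro Bochner_Integration.integrable_diff PO_integrable) auto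
  fix \<omega> assume "\<omega> \<in> space M"
  then have gd: "(G \<omega>, D \<omega>) \<in> supp_GD T Gs Dp" by (rule obs_in_supp_GD)
  show "integrable (K (G \<omega>) (D \<omega>)) (\<lambda>\<omega>. Y0 s \<omega> - Y0 (s - 1) \<omega>) \<and>
      (\<integral>y. Y0 s y - Y0 (s - 1) y \<partial>K (G \<omega>) (D \<omega>)) = untreated_trend s"
  proof
    show "integrable (K (G \<omega>) (D \<omega>)) (\<lambda>\<omega>. Y0 s \<omega> - Y0 (s - 1) \<omega>)"
      using s by (intro Bochner_Integration.integrable_diff PO_integrable_kernel[OF gd]) auto
  qed (rule kernel_integral_untreated_trend[OF gd s])
qed (use pos in simp)

lemma group_in_sets [measurable]: "{\<omega>\<in>space M. G \<omega> \<in> I} \<in> sets M" "{\<omega>\<in>space M. G \<omega> = g} \<in> sets M"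
  by measurable

lemma ATE_eq_trend_difference:
  assumes g: "g \<in> Gs - {Suc T}" and t: "t \<in> {2..T}" and d: "d \<in> Dp"
  shows "ATE M G T Yp g t d
    = cexp_ev M {\<omega>\<in>space M. G \<omega> = g} (\<lambda>\<omega>. Yp t g d \<omega> - Y0 (t - 1) \<omega>) - untreated_trend t"
proof -
  have gd: "(g, d) \<in> supp_GD T Gs Dp" using g d by (rule treated_in_supp_GD)
  have int: "integrable M (\<lambda>\<omega>. Yp t g d \<omega> - Y0 (t - 1) \<omega>)" "integrable M (\<lambda>\<omega>. Y0 t \<omega> - Y0 (t - 1) \<omega>)"
    using t gd by (auto intro!: Bochner_Integration.integrable_diff PO_integrable)
  have "ATE M G T Yp g t d = cexp_ev M {\<omega>\<in>space M. G \<omega> = g}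
      (\<lambda>\<omega>. (Yp t g d \<omega> - Y0 (t - 1) \<omega>) - (Y0 t \<omega> - Y0 (t - 1) \<omega>))"
    unfolding ATE_def by (rule cexp_ev_cong) simp
  also have "\<dots> = cexp_ev M {\<omega>\<in>space M. G \<omega> = g} (\<lambda>\<omega>. Yp t g d \<omega> - Y0 (t - 1) \<omega>)
      - cexp_ev M {\<omega>\<in>space M. G \<omega> = g} (\<lambda>\<omega>. Y0 t \<omega> - Y0 (t - 1) \<omega>)"
    using group_in_sets(2) int by (rule cexp_ev_diff)
  also have "cexp_ev M {\<omega>\<in>space M. G \<omega> = g} (\<lambda>\<omega>. Y0 t \<omega> - Y0 (t - 1) \<omega>) = untreated_trend t"
    using cexp_ev_groups_untreated_trend[of "{g}" t] g t group_prob_pos[of g] by simp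
  finally show ?thesis .
qed

lemma cexp_GD_long_difference:
  assumes g: "g \<in> Gs - {Suc T}" and t: "t \<in> {2..T}" and gt: "g \<le> t" and d: "d \<in> Dp"
  shows "cexp_GD K (\<lambda>\<omega>. Yo t \<omega> - Yo (g - 1) \<omega>) g d
    = cexp_ev M {\<omega>\<in>space M. G \<omega> = g} (\<lambda>\<omega>. Yp t g d \<omega> - Y0 (t - 1) \<omega>)
      + (\<Sum>s = g..t - 1. untreated_trend s)"
proof -
  have gd: "(g, d) \<in> supp_GD T Gs Dp" using g d by (rule treated_in_supp_GD)
  have g2: "2 \<le> g" using treated_group_bounds[OF g] by simp
  have int_first: "integrable (K g d) (\<lambda>\<omega>. Yp t g d \<omega> - Y0 (t - 1) \<omega>)"
    using t gd by (intro Bochner_Integration.integrable_diff PO_integrable_kernel[OF gd]) auto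
  have int_trend: "integrable (K g d) (\<lambda>\<omega>. Y0 s \<omega> - Y0 (s - 1) \<omega>)" if "s \<in> {g..t - 1}" for s
    using that g2 t by (intro Bochner_Integration.integrable_diff PO_integrable_kernel[OF gd]) auto
  have "AE \<omega> in K g d. Yo t \<omega> - Yo (g - 1) \<omega>
      = (Yp t g d \<omega> - Y0 (t - 1) \<omega>) + (\<Sum>s = g..t - 1. Y0 s \<omega> - Y0 (s - 1) \<omega>)"
    using kernel_Yobs_AE[OF gd, of t] kernel_Yobs_AE[OF gd, of "g - 1"]
  proof eventually_elim
    case (elim \<omega>)
    have "(\<Sum>s = Suc (g - 1)..t - 1. Y0 s \<omega> - Y0 (s - 1) \<omega>) = Y0 (t - 1) \<omega> - Y0 (g - 1) \<omega>"
      using gt g2 by (intro sum_diff_pred_telescope) simp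
    with elim gt g2 show ?case by (simp add: Suc_diff_1)
  qed
  moreover have "(\<lambda>\<omega>. Yo t \<omega> - Yo (g - 1) \<omega>) \<in> borel_measurable (K g d)"
    using t g2 gt by (intro kernel_borel_measurable borel_measurable_diff Yobs_measurable) auto
  moreover have int_sum: "integrable (K g d) (\<lambda>\<omega>. \<Sum>s = g..t - 1. Y0 s \<omega> - Y0 (s - 1) \<omega>)"
    using int_trend by (intro Bochner_Integration.integrable_sum) auto
  ultimately have "cexp_GD K (\<lambda>\<omega>. Yo t \<omega> - Yo (g - 1) \<omega>) g d
      = (\<integral>\<omega>. (Yp t g d \<omega> - Y0 (t - 1) \<omega>) + (\<Sum>s = g..t - 1. Y0 s \<omega> - Y0 (s - 1) \<omega>) \<partial>K g d)"
    unfolding cexp_GD_def using int_first by (intro integral_cong_AE) auto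
  also have "\<dots> = (\<integral>\<omega>. Yp t g d \<omega> - Y0 (t - 1) \<omega> \<partial>K g d)
      + (\<Sum>s = g..t - 1. \<integral>\<omega>. Y0 s \<omega> - Y0 (s - 1) \<omega> \<partial>K g d)"
    unfolding Bochner_Integration.integral_add[OF int_first int_sum]
    by (subst Bochner_Integration.integral_sum) (use int_trend in auto)
  also have "\<dots> = cexp_ev M {\<omega>\<in>space M. G \<omega> = g} (\<lambda>\<omega>. Yp t g d \<omega> - Y0 (t - 1) \<omega>)
      + (\<Sum>s = g..t - 1. untreated_trend s)"
  proof -
    have "(\<Sum>s = g..t - 1. \<integral>\<omega>. Y0 s \<omega> - Y0 (s - 1) \<omega> \<partial>K g d) = (\<Sum>s = g..t - 1. untreated_trend s)"
      using g2 t by (intro sum.cong refl kernel_integral_untreated_trend[OF gd]) auto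
    then show ?thesis using parallel_trends_treated[OF gd t] by (simp add: cexp_GD_def)
  qed
  finally show ?thesis .
qed

lemma not_yet_treated_eq:
  assumes "t \<le> T"
  shows "{\<omega>\<in>space M. W G D t \<omega> = 0} = {\<omega>\<in>space M. G \<omega> \<in> {g\<in>Gs. t < g}}"
proof -
  have "D \<omega> \<noteq> 0" if "\<omega> \<in> space M" "G \<omega> \<le> t" for \<omega>
    using dose_treated[OF that(1)] doses_pos that(2) assms by force
  then show ?thesis
    using G_in_groups dose_zero_iff_never_treated assms by (auto simp: W_def)
qed

lemma cexp_not_yet_treated_long_difference:
  assumes g2: "2 \<le> g" and gt: "g \<le> t" and tT: "t \<le> T"
  shows "cexp_ev M {\<omega>\<in>space M. W G D t \<omega> = 0} (\<lambda>\<omega>. Yo t \<omega> - Yo (g - 1) \<omega>)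
    = (\<Sum>s = g..t. untreated_trend s)"
proof -
  let ?I = "{g'\<in>Gs. t < g'}"
  have "{\<omega>\<in>space M. D \<omega> = 0} \<subseteq> {\<omega>\<in>space M. G \<omega> \<in> ?I}"
    using tT dose_zero_iff_never_treated G_in_groups by auto
  then have pos: "0 < prob {\<omega>\<in>space M. G \<omega> \<in> ?I}"
    using finite_measure_mono[OF _ group_in_sets(1)] untreated_prob_pos by (meson less_le_trans)
  have "cexp_ev M {\<omega>\<in>space M. G \<omega> \<in> ?I} (\<lambda>\<omega>. Yo t \<omega> - Yo (g - 1) \<omega>)
      = cexp_ev M {\<omega>\<in>space M. G \<omega> \<in> ?I} (\<lambda>\<omega>. \<Sum>s = g..t. Y0 s \<omega> - Y0 (s - 1) \<omega>)"
  proof (rule cexp_ev_cong)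
    fix \<omega> assume "\<omega> \<in> {\<omega>\<in>space M. G \<omega> \<in> ?I}"
    then have "Yo t \<omega> = Y0 t \<omega>" "Yo (g - 1) \<omega> = Y0 (g - 1) \<omega>"
      using gt by (auto simp: Yobs_def)
    moreover have "(\<Sum>s = Suc (g - 1)..t. Y0 s \<omega> - Y0 (s - 1) \<omega>) = Y0 t \<omega> - Y0 (g - 1) \<omega>"
      using gt by (intro sum_diff_pred_telescope) simp
    ultimately show "Yo t \<omega> - Yo (g - 1) \<omega> = (\<Sum>s = g..t. Y0 s \<omega> - Y0 (s - 1) \<omega>)"
      using g2 by (simp add: Suc_diff_1)
  qed
  also have "\<dots> = (\<Sum>s = g..t. cexp_ev M {\<omega>\<in>space M. G \<omega> \<in> ?I} (\<lambda>\<omega>. Y0 s \<omega> - Y0 (s - 1) \<omega>))"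
    using g2 tT by (intro cexp_ev_sum group_in_sets Bochner_Integration.integrable_diff PO_integrable) auto
  also have "\<dots> = (\<Sum>s = g..t. untreated_trend s)"
    using g2 tT pos by (intro sum.cong refl cexp_ev_groups_untreated_trend) auto
  finally show ?thesis using not_yet_treated_eq[OF tT] by simp
qed

lemma ATE_identification:
  assumes g: "g \<in> Gs - {Suc T}" and t: "t \<in> {2..T}" and gt: "g \<le> t" and d: "d \<in> Dp"
  shows "ATE M G T Yp g t d
    = cexp_GD K (\<lambda>\<omega>. Yo t \<omega> - Yo (g - 1) \<omega>) g d
      - cexp_ev M {\<omega>\<in>space M. W G D t \<omega> = 0} (\<lambda>\<omega>. Yo t \<omega> - Yo (g - 1) \<omega>)"
proof -
  have "{g..t} = insert t {g..t - 1}" "t \<notin> {g..t - 1}" using gt t by auto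
  then have "(\<Sum>s = g..t. untreated_trend s) = untreated_trend t + (\<Sum>s = g..t - 1. untreated_trend s)"
    by simp
  then show ?thesis
    using ATE_eq_trend_difference[OF g t d] cexp_GD_long_difference[OF g t gt d]
      cexp_not_yet_treated_long_difference[of g t] treated_group_bounds[OF g] gt t
    by simp
qed

lemma cexp_GD_long_difference_telescope:
  assumes g: "g \<in> Gs - {Suc T}" and t: "t \<in> {2..T}" and gt: "g \<le> t" and d: "d \<in> Dp"
  shows "cexp_GD K (\<lambda>\<omega>. Yo t \<omega> - Yo (g - 1) \<omega>) g d
    = (\<Sum>s = g..t. cexp_GD K (\<lambda>\<omega>. Yo s \<omega> - Yo (s - 1) \<omega>) g d)"
proof -
  have gd: "(g, d) \<in> supp_GD T Gs Dp" using g d by (rule treated_in_supp_GD)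
  have g2: "2 \<le> g" using treated_group_bounds[OF g] by simp
  have "cexp_GD K (\<lambda>\<omega>. Yo t \<omega> - Yo (g - 1) \<omega>) g d = (\<integral>\<omega>. (\<Sum>s = g..t. Yo s \<omega> - Yo (s - 1) \<omega>) \<partial>K g d)"
    unfolding cexp_GD_def
  proof (intro Bochner_Integration.integral_cong refl)
    fix \<omega>
    have "(\<Sum>s = Suc (g - 1)..t. Yo s \<omega> - Yo (s - 1) \<omega>) = Yo t \<omega> - Yo (g - 1) \<omega>"
      using gt by (intro sum_diff_pred_telescope) simp
    then show "Yo t \<omega> - Yo (g - 1) \<omega> = (\<Sum>s = g..t. Yo s \<omega> - Yo (s - 1) \<omega>)"
      using g2 by (simp add: Suc_diff_1)
  qed
  also have "\<dots> = (\<Sum>s = g..t. cexp_GD K (\<lambda>\<omega>. Yo s \<omega> - Yo (s - 1) \<omega>) g d)"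
    unfolding cexp_GD_def using g2 t
    by (intro Bochner_Integration.integral_sum Bochner_Integration.integrable_diff
        Yobs_integrable_kernel[OF gd]) auto
  finally show ?thesis .
qed

lemma ACR_identification:
  assumes Dp: "Dp = {dL..dU}" "dL < dU"
    and C1: "\<And>s. s \<in> {2..T} \<Longrightarrow> C1_within Dp (cexp_GD K (\<lambda>\<omega>. Yo s \<omega> - Yo (s - 1) \<omega>) g)"
    and g: "g \<in> Gs - {Suc T}" and t: "t \<in> {2..T}" and gt: "g \<le> t"
  shows "(\<lambda>d. cexp_ev M {\<omega>\<in>space M. G \<omega> = g} (Yp t g d)) differentiable_on Dp"
    and "d \<in> Dp \<Longrightarrow> ACR M G Dp Yp g t d
      = vector_derivative (cexp_GD K (\<lambda>\<omega>. Yo t \<omega> - Yo (g - 1) \<omega>) g) (at d within Dp)"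
proof -
  let ?h = "cexp_GD K (\<lambda>\<omega>. Yo t \<omega> - Yo (g - 1) \<omega>) g"
  let ?c = "cexp_ev M {\<omega>\<in>space M. G \<omega> = g} (Y0 t)
    - cexp_ev M {\<omega>\<in>space M. W G D t \<omega> = 0} (\<lambda>\<omega>. Yo t \<omega> - Yo (g - 1) \<omega>)"
  have "C1_within Dp (\<lambda>x. \<Sum>s = g..t. cexp_GD K (\<lambda>\<omega>. Yo s \<omega> - Yo (s - 1) \<omega>) g x)"
    using treated_group_bounds[OF g] t by (intro C1_within_sum C1) auto
  then have h: "C1_within Dp ?h"
    by (rule C1_within_cong) (use cexp_GD_long_difference_telescope[OF g t gt] in simp)
  have F: "cexp_ev M {\<omega>\<in>space M. G \<omega> = g} (Yp t g x) = ?h x + ?c" if x: "x \<in> Dp" for x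
  proof -
    have "t \<in> {1..T}" using t by simp
    then have "ATE M G T Yp g t x
        = cexp_ev M {\<omega>\<in>space M. G \<omega> = g} (Yp t g x) - cexp_ev M {\<omega>\<in>space M. G \<omega> = g} (Y0 t)"
      unfolding ATE_def using treated_in_supp_GD[OF g x]
      by (intro cexp_ev_diff group_in_sets PO_integrable) auto
    then show ?thesis using ATE_identification[OF g t gt x] by simp
  qed
  have hd: "?h differentiable_on {dL..dU}"
    using C1_within_imp_differentiable_on[OF h] Dp(1) by simp
  have F': "(\<lambda>d. cexp_ev M {\<omega>\<in>space M. G \<omega> = g} (Yp t g d)) x = ?h x + ?c" if "x \<in> {dL..dU}" for x
    using F that Dp(1) by simp
  show "(\<lambda>d. cexp_ev M {\<omega>\<in>space M. G \<omega> = g} (Yp t g d)) differentiable_on Dp"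
    using differentiable_on_interval_plus_const(1)[OF Dp(2) hd F'] Dp(1) by simp
  show "ACR M G Dp Yp g t d = vector_derivative ?h (at d within Dp)" if "d \<in> Dp"
    unfolding ACR_def using differentiable_on_interval_plus_const(2)[OF Dp(2) hd F'] that Dp(1) by simp
qed

end

theorem theorem4:
  fixes M :: "'a measure" and T :: nat and Gs :: "nat set" and Dp :: "real set"
    and G :: "'a \<Rightarrow> nat" and D :: "'a \<Rightarrow> real"
    and Yp :: "nat \<Rightarrow> nat \<Rightarrow> real \<Rightarrow> 'a \<Rightarrow> real"
    and K :: "nat \<Rightarrow> real \<Rightarrow> 'a measure"
  assumes prob: "prob_space M"
    and G_meas: "G \<in> measurable M (count_space UNIV)"
    and D_meas: "D \<in> borel_measurable M"
    and Gs_sub: "Gs \<subseteq> {2..Suc T}"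
    and G_in: "\<forall>\<omega>\<in>space M. G \<omega> \<in> Gs"
    and Gs_pos: "\<forall>g\<in>Gs. measure M {\<omega>\<in>space M. G \<omega> = g} > 0"
    and D_zero: "\<forall>\<omega>\<in>space M. D \<omega> = 0 \<longleftrightarrow> G \<omega> = Suc T"
    and D_treated: "\<forall>\<omega>\<in>space M. G \<omega> \<le> T \<longrightarrow> D \<omega> \<in> Dp"
    \<comment> \<open>Assumption 2-MP(a)\<close>
    and A2a_supp: "{x. in_support M D x} = {0} \<union> Dp"
    and A2a_pos: "Dp \<subseteq> {0<..}"
    and A2a_P0: "measure M {\<omega>\<in>space M. D \<omega> = 0} > 0"
    and A2a_cond: "\<forall>g\<in>Gs - {Suc T}. \<forall>d\<in>Dp. in_support_given M G g D d"
    \<comment> \<open>finite second moments of potential and observed outcomes\<close>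
    and mom_PO: "\<forall>t\<in>{1..T}. \<forall>(g, d)\<in>supp_GD T Gs Dp \<union> {(Suc T, 0)}.
        Yp t g d \<in> borel_measurable M \<and> integrable M (\<lambda>\<omega>. (Yp t g d \<omega>)\<^sup>2)"
    and mom_obs: "\<forall>t\<in>{1..T}. Yobs T Yp G D t \<in> borel_measurable M \<and>
        integrable M (\<lambda>\<omega>. (Yobs T Yp G D t \<omega>)\<^sup>2)"
    \<comment> \<open>conditional expectations given (G,D) via a regular conditional distribution\<close>
    and rcd: "rcd M G D K (supp_GD T Gs Dp)"
    and mom_cond: "\<forall>(g', d')\<in>supp_GD T Gs Dp. \<forall>t\<in>{1..T}.
        \<forall>(g, d)\<in>supp_GD T Gs Dp \<union> {(Suc T, 0)}. integrable (K g' d') (\<lambda>\<omega>. (Yp t g d \<omega>)\<^sup>2)"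
    \<comment> \<open>Assumption 3-MP\<close>
    and A3a: "\<forall>(g, d)\<in>supp_GD T Gs Dp. \<forall>t\<in>{1..T}. t < g \<longrightarrow>
        (\<forall>\<omega>\<in>space M. Yp t g d \<omega> = Yp t (Suc T) 0 \<omega>)"
    and A3b_1: "AE \<omega> in M. W G D 1 \<omega> = 0"
    and A3b_2: "\<forall>t\<in>{2..T}. \<forall>d\<in>Dp. \<forall>\<omega>\<in>space M. W G D (t - 1) \<omega> = d \<longrightarrow> W G D t \<omega> = d"
    \<comment> \<open>Assumption 5-MP (strong parallel trends)\<close>
    and SPT: "\<forall>(g, d)\<in>supp_GD T Gs Dp. \<forall>t\<in>{2..T}.
        cexp_GD K (\<lambda>\<omega>. Yp t g d \<omega> - Yp (t - 1) (Suc T) 0 \<omega>) g d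
          = cexp_ev M {\<omega>\<in>space M. G \<omega> = g} (\<lambda>\<omega>. Yp t g d \<omega> - Yp (t - 1) (Suc T) 0 \<omega>) \<and>
        cexp_GD K (\<lambda>\<omega>. Yp t (Suc T) 0 \<omega> - Yp (t - 1) (Suc T) 0 \<omega>) g d
          = cexp_ev M {\<omega>\<in>space M. D \<omega> = 0} (\<lambda>\<omega>. Yp t (Suc T) 0 \<omega> - Yp (t - 1) (Suc T) 0 \<omega>)"
  shows
    "(\<forall>g\<in>Gs - {Suc T}. \<forall>t\<in>{2..T}. g \<le> t \<longrightarrow> (\<forall>d\<in>Dp.
        ATE M G T Yp g t d
          = cexp_GD K (\<lambda>\<omega>. Yobs T Yp G D t \<omega> - Yobs T Yp G D (g - 1) \<omega>) g d
            - cexp_ev M {\<omega>\<in>space M. W G D t \<omega> = 0}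
                (\<lambda>\<omega>. Yobs T Yp G D t \<omega> - Yobs T Yp G D (g - 1) \<omega>)))
     \<and>
     (((\<exists>dL dU. 0 < dL \<and> dL < dU \<and> Dp = {dL..dU}) \<and>
       (\<forall>g\<in>Gs - {Suc T}. \<forall>t\<in>{2..T}.
          C1_within Dp (\<lambda>d. cexp_GD K (\<lambda>\<omega>. Yobs T Yp G D t \<omega> - Yobs T Yp G D (t - 1) \<omega>) g d)))
      \<longrightarrow>
      (\<forall>g\<in>Gs - {Suc T}. \<forall>t\<in>{2..T}. g \<le> t \<longrightarrow>
         (\<lambda>d. cexp_ev M {\<omega>\<in>space M. G \<omega> = g} (Yp t g d)) differentiable_on Dp \<and>
         (\<forall>d\<in>Dp. ACR M G Dp Yp g t d
            = vector_derivative
                (\<lambda>x. cexp_GD K (\<lambda>\<omega>. Yobs T Yp G D t \<omega> - Yobs T Yp G D (g - 1) \<omega>) g x)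
                (at d within Dp))))"
proof -
  interpret staggered_did M T Gs Dp G D Yp K
  proof (intro staggered_did.intro staggered_did_axioms.intro prob)
    show "G \<in> measurable M (count_space UNIV)" by (rule G_meas)
    show "D \<in> borel_measurable M" by (rule D_meas)
    show "Gs \<subseteq> {2..Suc T}" by (rule Gs_sub)
    show "rcd M G D K (supp_GD T Gs Dp)" by (rule rcd)
    show "Dp \<subseteq> {0<..}" by (rule A2a_pos)
    show "0 < measure M {\<omega>\<in>space M. D \<omega> = 0}" by (rule A2a_P0)
  qed (use G_in Gs_pos D_zero D_treated mom_PO mom_obs mom_cond SPT in \<open>blast+\<close>)
  show ?thesis
  proof (intro conjI impI, goal_cases ATE ACR)
    case ATE
    then show ?case using ATE_identification by blast
  next
    case ACR
    then obtain dL dU where "Dp = {dL..dU}" "dL < dU" by blast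
    with ACR show ?case using ACR_identification by blast
  qed
qed

end
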